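(* Let $D=(Q,\Sigma,\delta,q_0,A)$ and $D'=(Q',\Sigma,\delta',q_0',A')$ be minimized DFAs over the same alphabet with $L(D)\sim L(D')$. Then $D\cong_I D'$.
   Context: All DFAs are complete (total transition function $\delta$, extended to words in the usual way) and all their states are reachable from the start state. A DFA is \emph{minimized} if it is the minimal DFA for its language, i.e. all states are reachable and no two distinct states are equivalent (no two distinct states $p\neq q$ satisfy $L(p)=L(q)$, where $L(q)$ is the language accepted when $q$ is used as start state). Two languages $L,L'$ are \emph{finitely different}, written $L\sim L'$, if the symmetric difference $L\triangle L'$ is finite. The \emph{infinite part} $I(D)$ of a DFA $D$ is the set of states $q\in Q$ such that $\{w\in\Sigma^*:\delta(q_0,w)=q\}$ is infinite (equivalently: $q$ lies on a cycle, i.e. $\delta(q,w)=q$ for some nonempty $w$, or is reachable from a state on a cycle); the \emph{finite part} is $F(D)=Q\setminus I(D)$. We write $D\cong_I D'$ (isomorphic infinite parts) if there is a bijection $f:I(D)\to I(D')$ such that (1) for all $q\in I(D)$, $q\in A\iff f(q)\in A'$, and (2) for all $q\in I(D)$ and $c\in\Sigma$, $f(\delta(q,c))=\delta'(f(q),c)$. *)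

theory Defs
  imports Main
begin

definition delta_star :: "('q \<Rightarrow> 'a \<Rightarrow> 'q) \<Rightarrow> 'q \<Rightarrow> 'a list \<Rightarrow> 'q" where
  "delta_star \<delta> q w = foldl \<delta> q w"

definition dfa :: "'q set \<Rightarrow> 'a set \<Rightarrow> ('q \<Rightarrow> 'a \<Rightarrow> 'q) \<Rightarrow> 'q \<Rightarrow> 'q set \<Rightarrow> bool" where
  "dfa Q \<Sigma> \<delta> q0 A \<longleftrightarrow> finite Q \<and> finite \<Sigma> \<and> q0 \<in> Q \<and> A \<subseteq> Q
     \<and> (\<forall>q\<in>Q. \<forall>c\<in>\<Sigma>. \<delta> q c \<in> Q)
     \<and> (\<forall>q\<in>Q. \<exists>w\<in>lists \<Sigma>. delta_star \<delta> q0 w = q)"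

definition lang_from :: "'a set \<Rightarrow> ('q \<Rightarrow> 'a \<Rightarrow> 'q) \<Rightarrow> 'q set \<Rightarrow> 'q \<Rightarrow> 'a list set" where
  "lang_from \<Sigma> \<delta> A q = {w \<in> lists \<Sigma>. delta_star \<delta> q w \<in> A}"

definition lang :: "'a set \<Rightarrow> ('q \<Rightarrow> 'a \<Rightarrow> 'q) \<Rightarrow> 'q \<Rightarrow> 'q set \<Rightarrow> 'a list set" where
  "lang \<Sigma> \<delta> q0 A = lang_from \<Sigma> \<delta> A q0"

definition minimized :: "'q set \<Rightarrow> 'a set \<Rightarrow> ('q \<Rightarrow> 'a \<Rightarrow> 'q) \<Rightarrow> 'q \<Rightarrow> 'q set \<Rightarrow> bool" where
  "minimized Q \<Sigma> \<delta> q0 A \<longleftrightarrow> dfa Q \<Sigma> \<delta> q0 A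
     \<and> (\<forall>p\<in>Q. \<forall>q\<in>Q. p \<noteq> q \<longrightarrow> lang_from \<Sigma> \<delta> A p \<noteq> lang_from \<Sigma> \<delta> A q)"

definition finitely_different :: "'b set \<Rightarrow> 'b set \<Rightarrow> bool" where
  "finitely_different L L' \<longleftrightarrow> finite ((L - L') \<union> (L' - L))"

definition infinite_part :: "'q set \<Rightarrow> 'a set \<Rightarrow> ('q \<Rightarrow> 'a \<Rightarrow> 'q) \<Rightarrow> 'q \<Rightarrow> 'q set" where
  "infinite_part Q \<Sigma> \<delta> q0 = {q \<in> Q. infinite {w \<in> lists \<Sigma>. delta_star \<delta> q0 w = q}}"

definition iso_infinite_parts ::
  "'q set \<Rightarrow> 'a set \<Rightarrow> ('q \<Rightarrow> 'a \<Rightarrow> 'q) \<Rightarrow> 'q \<Rightarrow> 'q set \<Rightarrow>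
   'p set \<Rightarrow> ('p \<Rightarrow> 'a \<Rightarrow> 'p) \<Rightarrow> 'p \<Rightarrow> 'p set \<Rightarrow> bool" where
  "iso_infinite_parts Q \<Sigma> \<delta> q0 A Q' \<delta>' q0' A' \<longleftrightarrow>
     (\<exists>f. bij_betw f (infinite_part Q \<Sigma> \<delta> q0) (infinite_part Q' \<Sigma> \<delta>' q0')
        \<and> (\<forall>q\<in>infinite_part Q \<Sigma> \<delta> q0. q \<in> A \<longleftrightarrow> f q \<in> A')
        \<and> (\<forall>q\<in>infinite_part Q \<Sigma> \<delta> q0. \<forall>c\<in>\<Sigma>. f (\<delta> q c) = \<delta>' (f q) c))"

end

theory Submission
  imports Defs
begin

text \<open>Since the two languages differ only on finitely many words, after reading any word longer
than all of them both automata are in states with the same residual language. A state of the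
infinite part is reached by arbitrarily long words, and in a minimal DFA a state is determined by
its residual language; hence the two infinite parts carry the same set of residual languages, and
matching states with equal residuals is the isomorphism. It respects transitions because the
residual of \<open>\<delta> q c\<close> is the left quotient by \<open>c\<close> of the residual of \<open>q\<close>.\<close>

lemma delta_star_Nil [simp]: "delta_star \<delta> q [] = q"
  by (simp add: delta_star_def)

lemma delta_star_Cons [simp]: "delta_star \<delta> q (c # w) = delta_star \<delta> (\<delta> q c) w"
  by (simp add: delta_star_def)

lemma delta_star_append [simp]: "delta_star \<delta> q (u @ v) = delta_star \<delta> (delta_star \<delta> q u) v"
  by (simp add: delta_star_def)

lemma delta_star_in_dfa:
  assumes "dfa Q \<Sigma> \<delta> q0 A" and "q \<in> Q" and "w \<in> lists \<Sigma>"
  shows "delta_star \<delta> q w \<in> Q"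
  using assms(3,2) by (induction w arbitrary: q) (use assms(1) in \<open>auto simp: dfa_def\<close>)

lemma minimized_iff_inj_on_lang_from:
  "minimized Q \<Sigma> \<delta> q0 A \<longleftrightarrow> dfa Q \<Sigma> \<delta> q0 A \<and> inj_on (lang_from \<Sigma> \<delta> A) Q"
  unfolding minimized_def inj_on_def by blast

lemma finitely_different_commute: "finitely_different L L' \<longleftrightarrow> finitely_different L' L"
  by (auto simp: finitely_different_def Un_commute)

lemma in_accepting_iff_Nil_in_lang_from: "q \<in> A \<longleftrightarrow> [] \<in> lang_from \<Sigma> \<delta> A q"
  by (simp add: lang_from_def)

lemma lang_from_transition:
  assumes "c \<in> \<Sigma>"
  shows "lang_from \<Sigma> \<delta> A (\<delta> q c) = {x \<in> lists \<Sigma>. c # x \<in> lang_from \<Sigma> \<delta> A q}"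
  using assms by (auto simp: lang_from_def)

lemma lang_from_delta_star:
  assumes "w \<in> lists \<Sigma>"
  shows "lang_from \<Sigma> \<delta> A (delta_star \<delta> q w) = {x \<in> lists \<Sigma>. w @ x \<in> lang_from \<Sigma> \<delta> A q}"
  using assms by (auto simp: lang_from_def)

lemma infinite_lists_iff_unbounded_length:
  assumes "finite \<Sigma>" and "W \<subseteq> lists \<Sigma>"
  shows "infinite W \<longleftrightarrow> (\<forall>n. \<exists>w\<in>W. n \<le> length w)"
proof
  assume "infinite W"
  show "\<forall>n. \<exists>w\<in>W. n \<le> length w"
  proof (rule ccontr)
    assume "\<not> ?thesis"
    then obtain n where "\<forall>w\<in>W. length w \<le> n"
      by (meson nle_le)
    with assms(2) have "W \<subseteq> {xs. set xs \<subseteq> \<Sigma> \<and> length xs \<le> n}"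
      by (auto simp: in_lists_conv_set)
    with finite_lists_length_le[OF assms(1)] \<open>infinite W\<close> show False
      using finite_subset by blast
  qed
next
  assume "\<forall>n. \<exists>w\<in>W. n \<le> length w"
  then have "infinite (length ` W)"
    by (metis finite_nat_set_iff_bounded imageI not_less)
  then show "infinite W" by blast
qed

lemma infinite_part_iff_long_words:
  assumes "finite \<Sigma>"
  shows "q \<in> infinite_part Q \<Sigma> \<delta> q0 \<longleftrightarrow>
    q \<in> Q \<and> (\<forall>n. \<exists>w\<in>lists \<Sigma>. n \<le> length w \<and> delta_star \<delta> q0 w = q)"
  using infinite_lists_iff_unbounded_length[OF assms, of "{w \<in> lists \<Sigma>. delta_star \<delta> q0 w = q}"]
  by (auto simp: infinite_part_def)

lemma infinite_part_transition:
  assumes "dfa Q \<Sigma> \<delta> q0 A" and "q \<in> infinite_part Q \<Sigma> \<delta> q0" and "c \<in> \<Sigma>"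
  shows "\<delta> q c \<in> infinite_part Q \<Sigma> \<delta> q0"
proof -
  let ?W = "{w \<in> lists \<Sigma>. delta_star \<delta> q0 w = q}"
  have "(\<lambda>w. w @ [c]) ` ?W \<subseteq> {w \<in> lists \<Sigma>. delta_star \<delta> q0 w = \<delta> q c}"
    using assms(3) by auto
  moreover have "infinite ((\<lambda>w. w @ [c]) ` ?W)"
    using assms(2) by (simp add: infinite_part_def finite_image_iff inj_on_def)
  moreover have "\<delta> q c \<in> Q"
    using assms(1-3) by (auto simp: dfa_def infinite_part_def)
  ultimately show ?thesis
    by (auto simp: infinite_part_def dest: finite_subset)
qed

lemma finitely_different_long_prefix:
  assumes "finitely_different L L'"
  obtains N where "\<And>w x. N \<le> length w \<Longrightarrow> w @ x \<in> L \<longleftrightarrow> w @ x \<in> L'"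
proof -
  let ?X = "(L - L') \<union> (L' - L)"
  obtain N where bound: "\<forall>n\<in>length ` ?X. n < N"
    using assms by (metis finitely_different_def finite_imageI finite_nat_set_iff_bounded)
  have "w @ x \<in> L \<longleftrightarrow> w @ x \<in> L'" if "N \<le> length w" for w x
  proof -
    have "\<not> length (w @ x) < N"
      using that by simp
    then have "w @ x \<notin> ?X"
      using bound by blast
    then show ?thesis by blast
  qed
  with that show ?thesis by blast
qed

lemma finitely_different_long_words_same_residual:
  assumes "finitely_different (lang \<Sigma> \<delta> q0 A) (lang \<Sigma> \<delta>' q0' A')"
  obtains N where "\<And>w. w \<in> lists \<Sigma> \<Longrightarrow> N \<le> length w \<Longrightarrow>
    lang_from \<Sigma> \<delta>' A' (delta_star \<delta>' q0' w) = lang_from \<Sigma> \<delta> A (delta_star \<delta> q0 w)"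
proof -
  obtain N where N: "\<And>w x. N \<le> length w \<Longrightarrow> w @ x \<in> lang \<Sigma> \<delta> q0 A \<longleftrightarrow> w @ x \<in> lang \<Sigma> \<delta>' q0' A'"
    using finitely_different_long_prefix[OF assms] by blast
  have "lang_from \<Sigma> \<delta>' A' (delta_star \<delta>' q0' w) = lang_from \<Sigma> \<delta> A (delta_star \<delta> q0 w)"
    if "w \<in> lists \<Sigma>" "N \<le> length w" for w
    using N[OF that(2)] that(1) by (simp add: lang_from_delta_star lang_def)
  with that show ?thesis by blast
qed

lemma lang_from_image_infinite_part_subset:
  assumes fin: "finite \<Sigma>"
    and D': "dfa Q' \<Sigma> \<delta>' q0' A'" and inj': "inj_on (lang_from \<Sigma> \<delta>' A') Q'"
    and fd: "finitely_different (lang \<Sigma> \<delta> q0 A) (lang \<Sigma> \<delta>' q0' A')"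
  shows "lang_from \<Sigma> \<delta> A ` infinite_part Q \<Sigma> \<delta> q0 \<subseteq>
         lang_from \<Sigma> \<delta>' A' ` infinite_part Q' \<Sigma> \<delta>' q0'"
proof
  let ?L = "lang_from \<Sigma> \<delta> A" and ?L' = "lang_from \<Sigma> \<delta>' A'"
  fix R assume "R \<in> ?L ` infinite_part Q \<Sigma> \<delta> q0"
  then obtain p where p: "p \<in> infinite_part Q \<Sigma> \<delta> q0" and R: "R = ?L p" by blast
  obtain N where same_residual: "\<And>w. w \<in> lists \<Sigma> \<Longrightarrow> N \<le> length w \<Longrightarrow>
      ?L' (delta_star \<delta>' q0' w) = ?L (delta_star \<delta> q0 w)"
    using finitely_different_long_words_same_residual[OF fd] by blast
  have long: "\<forall>n. \<exists>w\<in>lists \<Sigma>. n \<le> length w \<and> delta_star \<delta> q0 w = p"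
    using p by (simp add: infinite_part_iff_long_words[OF fin])
  then obtain w0 where w0: "w0 \<in> lists \<Sigma>" "N \<le> length w0" "delta_star \<delta> q0 w0 = p" by blast
  define p' where "p' = delta_star \<delta>' q0' w0"
  have p'Q: "p' \<in> Q'"
    using delta_star_in_dfa[OF D' _ w0(1)] D' by (simp add: p'_def dfa_def)
  have Rp': "?L' p' = R"
    using same_residual[OF w0(1,2)] w0(3) by (simp add: p'_def R)
  have "\<exists>w\<in>lists \<Sigma>. n \<le> length w \<and> delta_star \<delta>' q0' w = p'" for n
  proof -
    obtain w where w: "w \<in> lists \<Sigma>" "max n N \<le> length w" "delta_star \<delta> q0 w = p"
      using long by blast
    have "delta_star \<delta>' q0' w \<in> Q'"
      using delta_star_in_dfa[OF D' _ w(1)] D' by (simp add: dfa_def)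
    moreover have "?L' (delta_star \<delta>' q0' w) = ?L' p'"
      using same_residual[OF w(1)] w(2,3) Rp' R by simp
    ultimately have "delta_star \<delta>' q0' w = p'"
      using inj' p'Q by (blast dest: inj_onD)
    then show ?thesis using w by auto
  qed
  with p'Q have "p' \<in> infinite_part Q' \<Sigma> \<delta>' q0'"
    by (simp add: infinite_part_iff_long_words[OF fin])
  with Rp' show "R \<in> ?L' ` infinite_part Q' \<Sigma> \<delta>' q0'" by blast
qed

lemma iso_infinite_parts_if_same_residuals:
  assumes D: "dfa Q \<Sigma> \<delta> q0 A" and D': "dfa Q' \<Sigma> \<delta>' q0' A'"
    and inj: "inj_on (lang_from \<Sigma> \<delta> A) (infinite_part Q \<Sigma> \<delta> q0)"
    and inj': "inj_on (lang_from \<Sigma> \<delta>' A') (infinite_part Q' \<Sigma> \<delta>' q0')"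
    and same: "lang_from \<Sigma> \<delta> A ` infinite_part Q \<Sigma> \<delta> q0 =
               lang_from \<Sigma> \<delta>' A' ` infinite_part Q' \<Sigma> \<delta>' q0'"
  shows "iso_infinite_parts Q \<Sigma> \<delta> q0 A Q' \<delta>' q0' A'"
proof -
  let ?I = "infinite_part Q \<Sigma> \<delta> q0" and ?I' = "infinite_part Q' \<Sigma> \<delta>' q0'"
  let ?L = "lang_from \<Sigma> \<delta> A" and ?L' = "lang_from \<Sigma> \<delta>' A'"
  define f where "f = the_inv_into ?I' ?L' \<circ> ?L"
  have bij: "bij_betw f ?I ?I'"
    unfolding f_def using inj_on_imp_bij_betw[OF inj] inj_on_imp_bij_betw[OF inj'] same
    by (metis bij_betw_the_inv_into bij_betw_trans)
  have Lf: "?L' (f q) = ?L q" if "q \<in> ?I" for q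
  proof -
    have "?L q \<in> ?L' ` ?I'"
      using same that by blast
    then show ?thesis
      by (simp add: f_def f_the_inv_into_f[OF inj'])
  qed
  have "q \<in> A \<longleftrightarrow> f q \<in> A'" if "q \<in> ?I" for q
    using Lf[OF that] in_accepting_iff_Nil_in_lang_from[of q A \<Sigma> \<delta>]
      in_accepting_iff_Nil_in_lang_from[of "f q" A' \<Sigma> \<delta>'] by simp
  moreover have "f (\<delta> q c) = \<delta>' (f q) c" if q: "q \<in> ?I" and c: "c \<in> \<Sigma>" for q c
  proof -
    have "\<delta> q c \<in> ?I"
      using infinite_part_transition[OF D q c] .
    then have "f (\<delta> q c) \<in> ?I'" and "?L' (f (\<delta> q c)) = ?L (\<delta> q c)"
      using bij Lf by (auto simp: bij_betw_def)
    moreover have "\<delta>' (f q) c \<in> ?I'"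
      using infinite_part_transition[OF D' _ c] bij q by (auto simp: bij_betw_def)
    moreover have "?L' (\<delta>' (f q) c) = ?L (\<delta> q c)"
      using Lf[OF q] by (simp add: lang_from_transition[OF c])
    ultimately show ?thesis
      by (metis inj_onD[OF inj'])
  qed
  ultimately show ?thesis
    using bij by (auto simp: iso_infinite_parts_def)
qed

theorem mainTheorem1:
  fixes Q :: "'q set" and \<Sigma> :: "'a set" and \<delta> :: "'q \<Rightarrow> 'a \<Rightarrow> 'q" and q0 :: 'q and A :: "'q set"
    and Q' :: "'p set" and \<delta>' :: "'p \<Rightarrow> 'a \<Rightarrow> 'p" and q0' :: 'p and A' :: "'p set"
  assumes "minimized Q \<Sigma> \<delta> q0 A"
    and "minimized Q' \<Sigma> \<delta>' q0' A'"
    and "finitely_different (lang \<Sigma> \<delta> q0 A) (lang \<Sigma> \<delta>' q0' A')"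
  shows "iso_infinite_parts Q \<Sigma> \<delta> q0 A Q' \<delta>' q0' A'"
proof -
  have D: "dfa Q \<Sigma> \<delta> q0 A" and inj: "inj_on (lang_from \<Sigma> \<delta> A) Q"
    and D': "dfa Q' \<Sigma> \<delta>' q0' A'" and inj': "inj_on (lang_from \<Sigma> \<delta>' A') Q'"
    using assms(1,2) by (simp_all add: minimized_iff_inj_on_lang_from)
  then have fin: "finite \<Sigma>"
    by (simp add: dfa_def)
  have fd': "finitely_different (lang \<Sigma> \<delta>' q0' A') (lang \<Sigma> \<delta> q0 A)"
    using assms(3) by (simp add: finitely_different_commute)
  have "infinite_part Q \<Sigma> \<delta> q0 \<subseteq> Q" and "infinite_part Q' \<Sigma> \<delta>' q0' \<subseteq> Q'"
    by (auto simp: infinite_part_def)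
  with inj inj' have "inj_on (lang_from \<Sigma> \<delta> A) (infinite_part Q \<Sigma> \<delta> q0)"
    and "inj_on (lang_from \<Sigma> \<delta>' A') (infinite_part Q' \<Sigma> \<delta>' q0')"
    by (auto intro: inj_on_subset)
  moreover have "lang_from \<Sigma> \<delta> A ` infinite_part Q \<Sigma> \<delta> q0 =
                 lang_from \<Sigma> \<delta>' A' ` infinite_part Q' \<Sigma> \<delta>' q0'"
    by (rule equalityI[OF lang_from_image_infinite_part_subset[OF fin D' inj' assms(3)]
          lang_from_image_infinite_part_subset[OF fin D inj fd']])
  ultimately show ?thesis
    using iso_infinite_parts_if_same_residuals[OF D D'] by blast
qed

end
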